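(* For every $n\ge1$, $$\mathrm{SH}_n=\sum_{\lambda\vdash n}\frac{2^{\ell(\lambda)}\,n(n-1)\cdots(n-\ell(\lambda)+2)}{m_1!\,m_2!\cdots m_n!}\,V_\lambda,$$ where the sum is over all partitions $\lambda$ of $n$, $\ell(\lambda)$ is the number of parts, $m_i$ is the number of parts equal to $i$, the product $n(n-1)\cdots(n-\ell(\lambda)+2)$ has $\ell(\lambda)-1$ factors (empty product $=1$ when $\ell(\lambda)=1$), and $V_\lambda=P_{\lambda_1}P_{\lambda_2}\cdots$.
   Context: Work in the ring $\Lambda_{\mathbb Q}$ of symmetric functions with rational coefficients in variables $x=(x_1,x_2,\dots)$; $p_k$ denotes the power sum. For $f\in\Lambda_{\mathbb Q}$, its shiftification $f(x/x)$ is obtained by writing $f$ as a polynomial in the power sums and substituting $p_{2i+1}\mapsto 2p_{2i+1}$ and $p_{2i}\mapsto 0$ for all $i\ge1$. A parking function of length $n$ is a sequence $(a_1,\dots,a_n)$ of positive integers whose weakly increasing rearrangement $b_1\le\cdots\le b_n$ satisfies $b_i\le i$ for all $i$. The symmetric group $S_n$ acts on the set of parking functions of length $n$ by permuting coordinates; $\mathrm{PF}_n$ denotes the Frobenius characteristic of this permutation representation ($\mathrm{PF}_0=1$). Define $\mathrm{SH}_n(x)=\mathrm{PF}_n(x/x)$. The one-row Schur $P$-functions $P_n$ are defined by $1+2\sum_{n\ge1}P_n(x)t^n=\prod_i\frac{1+x_it}{1-x_it}$. For any partition $\lambda$, $V_\lambda=P_{\lambda_1}P_{\lambda_2}\cdots$.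 *)

theory Defs
  imports "HOL-Combinatorics.Orbits" "HOL-Combinatorics.Permutations"
          "HOL-Library.Multiset" "HOL-Computational_Algebra.Formal_Power_Series"
begin

(* Symmetric functions are realised by evaluation at x_1..x_N (indices 0..N-1),
   for every finite N and every real point x. A homogeneous degree-n identity in
   Lambda_Q holds iff it holds for all such evaluations. *)

definition partitions :: "nat \<Rightarrow> nat multiset set" where
  "partitions n = {la. set_mset la \<subseteq> {1..} \<and> sum_mset la = n}"

definition psum :: "nat \<Rightarrow> (nat \<Rightarrow> real) \<Rightarrow> nat \<Rightarrow> real" where
  "psum N x k = (\<Sum>i<N. x i ^ k)"

definition pmono :: "nat \<Rightarrow> (nat \<Rightarrow> real) \<Rightarrow> nat multiset \<Rightarrow> real" where
  "pmono N x \<mu> = (\<Prod>k\<in>#\<mu>. psum N x k)"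

definition pmono_shift :: "nat \<Rightarrow> (nat \<Rightarrow> real) \<Rightarrow> nat multiset \<Rightarrow> real" where
  "pmono_shift N x \<mu> = (\<Prod>k\<in>#\<mu>. (if odd k then 2 * psum N x k else 0))"

definition parking_functions :: "nat \<Rightarrow> nat list set" where
  "parking_functions n = {a. length a = n \<and> (\<forall>i<n. 1 \<le> a ! i) \<and>
                              (\<forall>i<n. sort a ! i \<le> i + 1)}"

definition cycle_type :: "nat \<Rightarrow> (nat \<Rightarrow> nat) \<Rightarrow> nat multiset" where
  "cycle_type n \<sigma> = image_mset card (mset_set {orbit \<sigma> i | i. i < n})"

definition pf_fix :: "nat \<Rightarrow> (nat \<Rightarrow> nat) \<Rightarrow> nat" where
  "pf_fix n \<sigma> = card {a \<in> parking_functions n. \<forall>i<n. a ! (\<sigma> i) = a ! i}"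

(* Frobenius characteristic of the permutation representation on parking functions,
   expanded in the power-sum basis: coefficient of p_mu is
   (1/n!) * sum over sigma of cycle type mu of chi(sigma) *)
definition PF_coeff :: "nat \<Rightarrow> nat multiset \<Rightarrow> real" where
  "PF_coeff n \<mu> = (\<Sum>\<sigma>\<in>{\<sigma>. \<sigma> permutes {0..<n} \<and> cycle_type n \<sigma> = \<mu>}.
                      real (pf_fix n \<sigma>)) / fact n"

definition PF :: "nat \<Rightarrow> nat \<Rightarrow> (nat \<Rightarrow> real) \<Rightarrow> real" where
  "PF n N x = (\<Sum>\<mu>\<in>partitions n. PF_coeff n \<mu> * pmono N x \<mu>)"

(* SH_n = PF_n(x/x): shiftification applied to the power-sum expansion of PF_n *)
definition SH :: "nat \<Rightarrow> nat \<Rightarrow> (nat \<Rightarrow> real) \<Rightarrow> real" where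
  "SH n N x = (\<Sum>\<mu>\<in>partitions n. PF_coeff n \<mu> * pmono_shift N x \<mu>)"

(* one-row Schur P-function: 1 + 2 sum_{n>=1} P_n t^n = prod_i (1+x_i t)/(1-x_i t) *)
definition SchurP :: "nat \<Rightarrow> (nat \<Rightarrow> real) \<Rightarrow> nat \<Rightarrow> real" where
  "SchurP N x n = fps_nth (\<Prod>i<N. (1 + fps_const (x i) * fps_X) / (1 - fps_const (x i) * fps_X)) n / 2"

definition V :: "nat \<Rightarrow> (nat \<Rightarrow> real) \<Rightarrow> nat multiset \<Rightarrow> real" where
  "V N x la = (\<Prod>k\<in>#la. SchurP N x k)"

end

theory Submission
  imports Defs "HOL-Combinatorics.Multiset_Permutations"
begin

text \<open>
  Let \<sigma> permute n letters. The words of length n over {1..n+1} that are constant on the cycles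
  of \<sigma> number (n+1)^c, where c is the number of cycles, and by the cycle lemma exactly one of
  the n+1 cyclic shifts of the values of such a word is a parking function; so \<sigma> fixes
  (n+1)^(c-1) parking functions. After shiftification, SH_n is therefore 1/((n+1) n!) times the
  sum over all \<sigma> of the product over the cycles of (n+1) p_k(x/x), k the cycle length, and the
  exponential formula identifies this with [t^n] Q^(n+1) / (n+1), where
  Q = prod_i (1 + x_i t)/(1 - x_i t) has logarithmic derivative sum_k p_k(x/x) t^(k-1).
  As Q = 1 + 2 sum_k P_k t^k, expanding (1 + (Q - 1))^(n+1) over the compositions of n and
  grouping these by their underlying partition gives the stated coefficients, because
  binomial(n+1, l) l! / (n+1) = n (n-1) ... (n-l+2).
\<close>

section \<open>The cycle lemma for parking functions\<close>

lemma ex1_cyclic_record: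
  fixes P :: "nat \<Rightarrow> int"
  assumes "m \<ge> 1" and drop: "\<And>t. P (t + m) = P t - 1"
  shows "\<exists>!s. s < m \<and> (\<forall>k\<in>{1..<m}. P s \<le> P (s + k))"
proof
  have ex: "\<exists>s<m. \<forall>t<m. P s \<le> P t"
  proof -
    have "Min (P ` {..<m}) \<in> P ` {..<m}" using \<open>m \<ge> 1\<close> by (intro Min_in) (auto simp: lessThan_empty_iff)
    then obtain s where "s < m" "P s = Min (P ` {..<m})" by auto
    then show ?thesis by (metis Min_le finite_imageI finite_lessThan image_eqI lessThan_iff)
  qed
  define s0 where "s0 = (LEAST s. s < m \<and> (\<forall>t<m. P s \<le> P t))"
  have s0: "s0 < m" "\<forall>t<m. P s0 \<le> P t"
    using LeastI_ex[OF ex] unfolding s0_def by auto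
  have least: "P s0 < P t" if "t < s0" for t
    using not_less_Least[OF that[unfolded s0_def]] s0 \<open>t < s0\<close> by force
  show "s0 < m \<and> (\<forall>k\<in>{1..<m}. P s0 \<le> P (s0 + k))"
  proof (intro conjI ballI)
    fix k assume k: "k \<in> {1..<m}"
    show "P s0 \<le> P (s0 + k)"
    proof (cases "s0 + k < m")
      case False
      then have "s0 + k = (s0 + k - m) + m" "s0 + k - m < s0" using k by auto
      then show ?thesis using drop[of "s0 + k - m"] least by (metis zle_diff1_eq)
    qed (use s0 in auto)
  qed (fact s0)
  show "s = s0" if "s < m \<and> (\<forall>k\<in>{1..<m}. P s \<le> P (s + k))" for s
  proof -
    have no_two: False
      if "a < b" "b < m" and ab: "\<forall>k\<in>{1..<m}. P a \<le> P (a + k)" "\<forall>k\<in>{1..<m}. P b \<le> P (b + k)"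
      for a b
    proof -
      have "P a \<le> P (a + (b - a))" by (rule ab(1)[rule_format]) (use that in auto)
      moreover have "P b \<le> P (b + (m + a - b))" by (rule ab(2)[rule_format]) (use that in auto)
      moreover have "a + (b - a) = b" "b + (m + a - b) = a + m" using that by auto
      ultimately have "P a \<le> P b" "P b \<le> P (a + m)" by simp_all
      then show False using drop[of a] by simp
    qed
    show ?thesis
      using no_two[of s s0] no_two[of s0 s] that \<open>s0 < m \<and> _\<close> by (metis linorder_neqE_nat)
  qed
qed

lemma cycle_lemma:
  fixes c :: "nat \<Rightarrow> nat"
  assumes total: "(\<Sum>u<m. c u) + 1 = m"
  shows "\<exists>!s. s < m \<and> (\<forall>k\<in>{1..<m}. k \<le> (\<Sum>u<k. c ((s + u) mod m)))"
proof -
  \<comment> \<open>the walk with steps \<open>c (u mod m) - 1\<close>, which loses 1 per period\<close>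
  define P where "P t = (\<Sum>u<t. int (c (u mod m)) - 1)" for t
  have partial: "int (\<Sum>u<k. c ((s + u) mod m)) = P (s + k) - P s + int k" for s k
    by (induction k) (simp_all add: P_def add.commute)
  have "P m = -1"
  proof -
    have "P m = int (\<Sum>u<m. c u) - int m" unfolding P_def by (simp add: sum_subtractf)
    then show ?thesis using arg_cong[OF total, of int] by simp
  qed
  then have drop: "P (t + m) = P t - 1" for t
    by (induction t) (simp_all add: P_def)
  have "\<exists>!s. s < m \<and> (\<forall>k\<in>{1..<m}. P s \<le> P (s + k))"
    by (rule ex1_cyclic_record) (use total drop in auto)
  moreover have "k \<le> (\<Sum>u<k. c ((s + u) mod m)) \<longleftrightarrow> P s \<le> P (s + k)" for s k
    using partial[of s k] by linarith
  ultimately show ?thesis by simp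
qed

lemma sorted_nth_le_Suc_iff:
  assumes "sorted s"
  shows "(\<forall>i<length s. s ! i \<le> i + 1) \<longleftrightarrow>
         (\<forall>k\<in>{1..length s}. k \<le> length (filter (\<lambda>v. v \<le> k) s))"
proof
  assume bound: "\<forall>i<length s. s ! i \<le> i + 1"
  show "\<forall>k\<in>{1..length s}. k \<le> length (filter (\<lambda>v. v \<le> k) s)"
  proof
    fix k assume "k \<in> {1..length s}"
    then have "{..<k} \<subseteq> {j. j < length s \<and> s ! j \<le> k}"
    proof (intro subsetI CollectI conjI)
      fix j assume "j \<in> {..<k}"
      then show "j < length s" using \<open>k \<in> {1..length s}\<close> by simp
      then have "s ! j \<le> j + 1" using bound by blast
      then show "s ! j \<le> k" using \<open>j \<in> {..<k}\<close> by simp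
    qed
    then have "card {..<k} \<le> card {j. j < length s \<and> s ! j \<le> k}" by (intro card_mono) auto
    then show "k \<le> length (filter (\<lambda>v. v \<le> k) s)" by (simp add: length_filter_conv_card)
  qed
next
  assume counts: "\<forall>k\<in>{1..length s}. k \<le> length (filter (\<lambda>v. v \<le> k) s)"
  show "\<forall>i<length s. s ! i \<le> i + 1"
  proof (intro allI impI, rule ccontr)
    fix i assume i: "i < length s" and big: "\<not> s ! i \<le> i + 1"
    have "j < i" if "j < length s" "s ! j \<le> i + 1" for j
    proof (rule ccontr)
      assume "\<not> j < i"
      then have "s ! i \<le> s ! j" using \<open>sorted s\<close> that(1) by (simp add: sorted_nth_mono)
      then show False using big that(2) by simp
    qed
    then have "{j. j < length s \<and> s ! j \<le> i + 1} \<subseteq> {..<i}" by blast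
    then have "card {j. j < length s \<and> s ! j \<le> i + 1} \<le> i"
      by (metis card_lessThan card_mono finite_lessThan)
    moreover have "i + 1 \<le> length (filter (\<lambda>v. v \<le> i + 1) s)" using counts i by auto
    ultimately show False by (simp add: length_filter_conv_card)
  qed
qed

lemma parking_functions_iff_counts:
  "a \<in> parking_functions n \<longleftrightarrow>
     length a = n \<and> (\<forall>v\<in>set a. 1 \<le> v) \<and> (\<forall>k\<in>{1..n}. k \<le> length (filter (\<lambda>v. v \<le> k) a))"
proof (cases "length a = n")
  case True
  have "length (filter (\<lambda>v. v \<le> k) (sort a)) = length (filter (\<lambda>v. v \<le> k) a)" for k
    by (metis mset_filter mset_sort size_mset)
  then have "(\<forall>i<n. sort a ! i \<le> i + 1) \<longleftrightarrow>
      (\<forall>k\<in>{1..n}. k \<le> length (filter (\<lambda>v. v \<le> k) a))"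
    using sorted_nth_le_Suc_iff[of "sort a"] True by simp
  then show ?thesis using True by (simp add: parking_functions_def all_set_conv_all_nth)
qed (simp add: parking_functions_def)

lemma set_parking_function: "a \<in> parking_functions n \<Longrightarrow> set a \<subseteq> {1..n}"
proof
  fix v assume a: "a \<in> parking_functions n" and v: "v \<in> set a"
  then have len: "length (sort a) = n" and bound: "\<forall>i<n. sort a ! i \<le> i + 1"
    and pos: "\<forall>v\<in>set a. 1 \<le> v"
    by (auto simp: parking_functions_def all_set_conv_all_nth)
  from v have "v \<in> set (sort a)" by simp
  then obtain i where "i < n" "v = sort a ! i" unfolding in_set_conv_nth len by metis
  then have "v \<le> n" using bound by force
  then show "v \<in> {1..n}" using pos v by simp
qed

text \<open>The values \<open>{1..m}\<close> are treated as residues modulo m.\<close>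

definition shift_values :: "nat \<Rightarrow> nat \<Rightarrow> nat list \<Rightarrow> nat list" where
  "shift_values m r a = map (\<lambda>v. (v - 1 + r) mod m + 1) a"

lemma length_shift_values [simp]: "length (shift_values m r a) = length a"
  by (simp add: shift_values_def)

lemma nth_shift_values: "i < length a \<Longrightarrow> shift_values m r a ! i = (a ! i - 1 + r) mod m + 1"
  by (simp add: shift_values_def)

lemma shift_values_shift_values: "shift_values m r (shift_values m r' a) = shift_values m (r' + r) a"
  by (simp add: shift_values_def mod_add_left_eq add.assoc)

lemma shift_values_self: "set a \<subseteq> {1..m} \<Longrightarrow> shift_values m m a = a"
  by (auto simp: shift_values_def subset_iff intro!: map_idI)

lemma set_shift_values: "0 < m \<Longrightarrow> set (shift_values m r a) \<subseteq> {1..m}"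
  by (auto simp: shift_values_def Suc_le_eq)

lemma add_mod_eq_iff:
  fixes m s u v :: nat
  assumes "s < m" "u < m" "v < m"
  shows "(s + u) mod m = v \<longleftrightarrow> u = (v + (m - s)) mod m"
proof
  assume "(s + u) mod m = v"
  then have "(v + (m - s)) mod m = ((s + u) mod m + (m - s)) mod m" by simp
  also have "\<dots> = (s + u + (m - s)) mod m" by (rule mod_add_left_eq)
  also have "s + u + (m - s) = u + m" using assms by simp
  finally show "u = (v + (m - s)) mod m" using assms by simp
next
  assume "u = (v + (m - s)) mod m"
  then have "(s + u) mod m = (s + (v + (m - s))) mod m" by (simp add: mod_add_right_eq)
  also have "\<dots> = (v + m) mod m" using assms by simp
  finally show "(s + u) mod m = v" using assms by simp
qed

lemma length_filter_shift_values:
  assumes "set b \<subseteq> {1..m}" "s < m" "k \<le> m"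
  shows "length (filter (\<lambda>v. v \<le> k) (shift_values m (m - s) b)) =
         (\<Sum>u<k. count_list b ((s + u) mod m + 1))"
  using assms(1)
proof (induction b)
  case (Cons v b)
  define r where "r = (v - 1 + (m - s)) mod m"
  have "(\<Sum>u<k. if v = (s + u) mod m + 1 then 1 else 0) = (\<Sum>u<k. if u = r then 1 else 0 :: nat)"
  proof (intro sum.cong refl)
    fix u assume "u \<in> {..<k}"
    then have "(s + u) mod m = v - 1 \<longleftrightarrow> u = r"
      unfolding r_def using add_mod_eq_iff[of s m u "v - 1"] Cons.prems assms(2,3) by auto
    moreover have "v = (s + u) mod m + 1 \<longleftrightarrow> (s + u) mod m = v - 1" using Cons.prems by auto
    ultimately show "(if v = (s + u) mod m + 1 then 1 else 0) = (if u = r then 1 else 0 :: nat)" by simp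
  qed
  also have "\<dots> = (if r < k then 1 else 0)" by simp
  moreover have "count_list (v # b) w = count_list b w + (if v = w then 1 else 0)" for w
    by simp
  ultimately have "(\<Sum>u<k. count_list (v # b) ((s + u) mod m + 1)) =
      (\<Sum>u<k. count_list b ((s + u) mod m + 1)) + (if r < k then 1 else 0)"
    by (simp only: sum.distrib)
  moreover have "shift_values m (m - s) (v # b) = (r + 1) # shift_values m (m - s) b"
    by (simp add: shift_values_def r_def)
  ultimately show ?case using Cons by simp
qed (simp add: shift_values_def)

lemma ex1_parking_shift:
  assumes "length b = n" "set b \<subseteq> {1..n + 1}"
  shows "\<exists>!s. s < n + 1 \<and> shift_values (n + 1) (n + 1 - s) b \<in> parking_functions n"
proof -
  define c where "c u = count_list b (u + 1)" for u
  have "(\<Sum>u<n + 1. c u) = n"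
    using sum_count_set[OF assms(2)] assms(1) by (simp add: c_def sum.atLeast1_atMost_eq)
  then have "\<exists>!s. s < n + 1 \<and> (\<forall>k\<in>{1..<n + 1}. k \<le> (\<Sum>u<k. c ((s + u) mod (n + 1))))"
    by (intro cycle_lemma) simp
  moreover have "shift_values (n + 1) (n + 1 - s) b \<in> parking_functions n \<longleftrightarrow>
      (\<forall>k\<in>{1..<n + 1}. k \<le> (\<Sum>u<k. c ((s + u) mod (n + 1))))" if "s < n + 1" for s
    using set_shift_values[of "n + 1" "n + 1 - s" b] length_filter_shift_values[OF assms(2) that]
    by (auto simp: parking_functions_iff_counts assms(1) c_def)
  ultimately show ?thesis by blast
qed

section \<open>Parking functions fixed by a permutation\<close>

text \<open>Double counting of the pairs \<open>(b, s)\<close> with \<open>\<rho> s b \<in> A\<close>:\<close>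

lemma card_eq_mult_card_if_ex1_shift:
  fixes \<rho> :: "nat \<Rightarrow> 'a \<Rightarrow> 'a"
  assumes "finite W"
    and bij: "\<And>s. s < m \<Longrightarrow> bij_betw (\<rho> s) W W"
    and unique: "\<And>b. b \<in> W \<Longrightarrow> \<exists>!s. s < m \<and> \<rho> s b \<in> A"
  shows "card W = m * card (W \<inter> A)"
proof -
  have count: "card {x \<in> X. P x} = (\<Sum>x\<in>X. if P x then 1 else 0)" if "finite X" for X and P :: "'b \<Rightarrow> bool"
    using sum.inter_filter[OF that, of "\<lambda>_. 1 :: nat" P] by simp
  have one: "card {s \<in> {..<m}. \<rho> s b \<in> A} = 1" if "b \<in> W" for b
  proof -
    from unique[OF that] obtain s where "s < m" "\<rho> s b \<in> A"
      and "\<forall>t. t < m \<and> \<rho> t b \<in> A \<longrightarrow> t = s" by blast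
    then have "{s \<in> {..<m}. \<rho> s b \<in> A} = {s}" by blast
    then show ?thesis by simp
  qed
  have "card W = (\<Sum>b\<in>W. card {s \<in> {..<m}. \<rho> s b \<in> A})"
    using one by simp
  also have "\<dots> = (\<Sum>b\<in>W. \<Sum>s<m. if \<rho> s b \<in> A then 1 else 0)"
    by (simp only: count finite_lessThan)
  also have "\<dots> = (\<Sum>s<m. \<Sum>b\<in>W. if \<rho> s b \<in> A then 1 else 0)"
    by (rule sum.swap)
  also have "\<dots> = (\<Sum>s<m. \<Sum>b\<in>W. if b \<in> A then 1 else 0)"
    by (intro sum.cong refl sum.reindex_bij_betw bij) simp
  also have "\<dots> = m * card (W \<inter> A)"
    using count[OF \<open>finite W\<close>, of "\<lambda>b. b \<in> A"] by (simp add: Int_def)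
  finally show ?thesis .
qed

definition invariant_words :: "nat \<Rightarrow> 'a set \<Rightarrow> (nat \<Rightarrow> nat) \<Rightarrow> 'a list set" where
  "invariant_words n B \<sigma> = {a. length a = n \<and> set a \<subseteq> B \<and> (\<forall>i<n. a ! \<sigma> i = a ! i)}"

lemma finite_invariant_words: "finite B \<Longrightarrow> finite (invariant_words n B \<sigma>)"
  by (rule finite_subset[OF _ finite_lists_length_eq[of B n]]) (auto simp: invariant_words_def)

lemma bij_betw_shift_values_invariant_words:
  assumes "\<sigma> permutes {0..<n}" "0 < m" "s \<le> m"
  shows "bij_betw (shift_values m (m - s)) (invariant_words n {1..m} \<sigma>) (invariant_words n {1..m} \<sigma>)"
proof (rule bij_betw_byWitness[where f' = "shift_values m s"])
  have "\<sigma> i < n" if "i < n" for i using permutes_in_image[OF assms(1)] that by simp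
  then have closed: "shift_values m r ` invariant_words n {1..m} \<sigma> \<subseteq> invariant_words n {1..m} \<sigma>" for r
    using set_shift_values[OF assms(2)] by (auto simp: invariant_words_def nth_shift_values)
  show "shift_values m (m - s) ` invariant_words n {1..m} \<sigma> \<subseteq> invariant_words n {1..m} \<sigma>"
    and "shift_values m s ` invariant_words n {1..m} \<sigma> \<subseteq> invariant_words n {1..m} \<sigma>"
    by (rule closed)+
  have "shift_values m r (shift_values m r' a) = a" if "r' + r = m" "a \<in> invariant_words n {1..m} \<sigma>" for a r r'
    using that by (simp add: shift_values_shift_values shift_values_self invariant_words_def)
  then show "\<forall>a\<in>invariant_words n {1..m} \<sigma>. shift_values m s (shift_values m (m - s) a) = a"
    and "\<forall>a\<in>invariant_words n {1..m} \<sigma>. shift_values m (m - s) (shift_values m s a) = a"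
    using assms(3) by auto
qed

lemma Suc_mult_pf_fix_eq_card:
  assumes "\<sigma> permutes {0..<n}"
  shows "(n + 1) * pf_fix n \<sigma> = card (invariant_words n {1..n + 1} \<sigma>)"
proof -
  have "a \<in> invariant_words n {1..n + 1} \<sigma> \<longleftrightarrow> (\<forall>i<n. a ! \<sigma> i = a ! i)"
    if "a \<in> parking_functions n" for a
    using set_parking_function[OF that] that by (auto simp: invariant_words_def parking_functions_def)
  then have "{a \<in> parking_functions n. \<forall>i<n. a ! \<sigma> i = a ! i} =
      invariant_words n {1..n + 1} \<sigma> \<inter> parking_functions n" by blast
  then have "pf_fix n \<sigma> = card (invariant_words n {1..n + 1} \<sigma> \<inter> parking_functions n)"
    unfolding pf_fix_def by simp
  moreover have "card (invariant_words n {1..n + 1} \<sigma>) =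
      (n + 1) * card (invariant_words n {1..n + 1} \<sigma> \<inter> parking_functions n)"
  proof (rule card_eq_mult_card_if_ex1_shift)
    show "\<exists>!s. s < n + 1 \<and> shift_values (n + 1) (n + 1 - s) b \<in> parking_functions n"
      if "b \<in> invariant_words n {1..n + 1} \<sigma>" for b
      using that by (intro ex1_parking_shift) (auto simp: invariant_words_def)
  qed (use assms bij_betw_shift_values_invariant_words in \<open>auto intro: finite_invariant_words\<close>)
  ultimately show ?thesis by simp
qed

section \<open>Words constant on the cycles of a permutation\<close>

definition perm_cycles :: "('a \<Rightarrow> 'a) \<Rightarrow> 'a set \<Rightarrow> 'a set set" where
  "perm_cycles \<sigma> S = (\<lambda>i. orbit \<sigma> i) ` S"

lemma orbit_eq_if_mem_orbit: "permutation \<sigma> \<Longrightarrow> j \<in> orbit \<sigma> i \<Longrightarrow> orbit \<sigma> j = orbit \<sigma> i"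
  by (metis cyclic_on_orbit' orbit_cyclic_eq3)

lemma Union_perm_cycles: "\<sigma> permutes S \<Longrightarrow> finite S \<Longrightarrow> \<Union>(perm_cycles \<sigma> S) = S"
  unfolding perm_cycles_def
  by (blast dest: permutes_orbit_subset intro: permutation_self_in_orbit permutation_permutes[THEN iffD2])

lemma invariant_word_nth_orbit:
  assumes "a \<in> invariant_words n B \<sigma>" "\<sigma> permutes {0..<n}" "i < n" "j \<in> orbit \<sigma> i"
  shows "a ! j = a ! i"
  using assms(4)
proof induction
  case (step j)
  have "orbit \<sigma> i \<subseteq> {0..<n}" using permutes_orbit_subset[OF assms(2)] assms(3) by simp
  then have "j < n" using step.hyps by auto
  then show ?case using step.IH assms(1) by (simp add: invariant_words_def)
qed (use assms in \<open>simp add: invariant_words_def\<close>)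

definition orbit_word :: "(nat \<Rightarrow> nat) \<Rightarrow> nat \<Rightarrow> (nat set \<Rightarrow> 'a) \<Rightarrow> 'a list" where
  "orbit_word \<sigma> n \<phi> = map (\<lambda>i. \<phi> (orbit \<sigma> i)) [0..<n]"

lemma orbit_word_mem_invariant_words:
  assumes \<sigma>: "\<sigma> permutes {0..<n}" and \<phi>: "\<phi> \<in> perm_cycles \<sigma> {0..<n} \<rightarrow>\<^sub>E B"
  shows "orbit_word \<sigma> n \<phi> \<in> invariant_words n B \<sigma>"
proof -
  have "orbit \<sigma> (\<sigma> i) = orbit \<sigma> i" for i
    using \<sigma> by (intro permutation_orbit_step) (auto simp: permutation_permutes)
  moreover have "\<sigma> i < n" if "i < n" for i using permutes_in_image[OF \<sigma>] that by simp
  moreover have "\<phi> (orbit \<sigma> i) \<in> B" if "i < n" for i using \<phi> that by (auto simp: perm_cycles_def)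
  ultimately show ?thesis by (auto simp: invariant_words_def orbit_word_def)
qed

lemma inj_on_orbit_word: "inj_on (orbit_word \<sigma> n) (perm_cycles \<sigma> {0..<n} \<rightarrow>\<^sub>E B)"
proof (rule inj_onI)
  fix \<phi> \<psi>
  assume \<phi>: "\<phi> \<in> perm_cycles \<sigma> {0..<n} \<rightarrow>\<^sub>E B" and \<psi>: "\<psi> \<in> perm_cycles \<sigma> {0..<n} \<rightarrow>\<^sub>E B"
    and eq: "orbit_word \<sigma> n \<phi> = orbit_word \<sigma> n \<psi>"
  have "\<phi> (orbit \<sigma> i) = \<psi> (orbit \<sigma> i)" if "i < n" for i
    using arg_cong[OF eq, of "\<lambda>a. a ! i"] that by (simp add: orbit_word_def)
  then show "\<phi> = \<psi>" using \<phi> \<psi> by (intro PiE_ext) (auto simp: perm_cycles_def)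
qed

lemma invariant_words_subset_image_orbit_word:
  assumes \<sigma>: "\<sigma> permutes {0..<n}"
  shows "invariant_words n B \<sigma> \<subseteq> orbit_word \<sigma> n ` (perm_cycles \<sigma> {0..<n} \<rightarrow>\<^sub>E B)"
proof
  fix a assume a: "a \<in> invariant_words n B \<sigma>"
  define \<phi> where "\<phi> = (\<lambda>c\<in>perm_cycles \<sigma> {0..<n}. a ! (SOME j. j \<in> c))"
  have "\<phi> (orbit \<sigma> i) = a ! i" if "i < n" for i
  proof -
    have "(SOME j. j \<in> orbit \<sigma> i) \<in> orbit \<sigma> i"
      using \<sigma> by (intro someI[of "\<lambda>j. j \<in> orbit \<sigma> i" i] permutation_self_in_orbit)
        (auto simp: permutation_permutes)
    then show ?thesis using invariant_word_nth_orbit[OF a \<sigma> that] that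
      by (simp add: \<phi>_def perm_cycles_def)
  qed
  then have "orbit_word \<sigma> n \<phi> = a" "\<phi> \<in> perm_cycles \<sigma> {0..<n} \<rightarrow>\<^sub>E B"
    using a by (auto simp: orbit_word_def invariant_words_def perm_cycles_def \<phi>_def intro: nth_equalityI)
  then show "a \<in> orbit_word \<sigma> n ` (perm_cycles \<sigma> {0..<n} \<rightarrow>\<^sub>E B)" by blast
qed

lemma card_invariant_words:
  assumes "\<sigma> permutes {0..<n}"
  shows "card (invariant_words n B \<sigma>) = card B ^ card (perm_cycles \<sigma> {0..<n})"
proof -
  have "orbit_word \<sigma> n ` (perm_cycles \<sigma> {0..<n} \<rightarrow>\<^sub>E B) = invariant_words n B \<sigma>"
    using orbit_word_mem_invariant_words[OF assms] invariant_words_subset_image_orbit_word[OF assms] by blast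
  then have "card (invariant_words n B \<sigma>) = card (perm_cycles \<sigma> {0..<n} \<rightarrow>\<^sub>E B)"
    using card_image[OF inj_on_orbit_word] by metis
  also have "\<dots> = card B ^ card (perm_cycles \<sigma> {0..<n})"
    by (simp add: card_PiE perm_cycles_def)
  finally show ?thesis .
qed

lemma cycle_type_conv_perm_cycles: "cycle_type n \<sigma> = image_mset card (mset_set (perm_cycles \<sigma> {0..<n}))"
proof -
  have "{orbit \<sigma> i | i. i < n} = perm_cycles \<sigma> {0..<n}" by (auto simp: perm_cycles_def)
  then show ?thesis by (simp add: cycle_type_def)
qed

lemma cycle_type_in_partitions:
  assumes \<sigma>: "\<sigma> permutes {0..<n}"
  shows "cycle_type n \<sigma> \<in> partitions n"
proof -
  define K where "K = perm_cycles \<sigma> {0..<n}"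
  have perm: "permutation \<sigma>" using \<sigma> by (auto simp: permutation_permutes)
  have finite_cycle: "finite c" "c \<noteq> {}" if "c \<in> K" for c
    using that finite_orbit[OF permutation_self_in_orbit[OF perm]] orbit_nonempty[of \<sigma>]
    by (auto simp: K_def perm_cycles_def)
  have "pairwise disjnt K"
    by (auto simp: pairwise_def disjnt_def K_def perm_cycles_def dest: orbit_eq_if_mem_orbit[OF perm])
  then have "sum card K = card (\<Union>K)"
    using finite_cycle by (intro card_Union_disjoint[symmetric]) auto
  also have "\<Union>K = {0..<n}"
    unfolding K_def by (rule Union_perm_cycles[OF \<sigma>]) simp
  finally have "sum_mset (cycle_type n \<sigma>) = n"
    by (simp add: cycle_type_conv_perm_cycles sum_unfold_sum_mset K_def)
  moreover have "set_mset (cycle_type n \<sigma>) \<subseteq> {1..}"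
    using finite_cycle
    by (auto simp: cycle_type_conv_perm_cycles K_def Suc_le_eq card_gt_0_iff perm_cycles_def)
  ultimately show ?thesis by (simp add: partitions_def)
qed

section \<open>The exponential formula\<close>

lemma sum_Pow_card:
  fixes f :: "nat \<Rightarrow> 'b::comm_semiring_1"
  assumes "finite T"
  shows "(\<Sum>D\<in>Pow T. f (card D)) = (\<Sum>j\<le>card T. of_nat (card T choose j) * f j)"
proof -
  have "(\<Sum>D\<in>Pow T. f (card D)) = (\<Sum>j\<le>card T. \<Sum>D\<in>{D \<in> Pow T. card D = j}. f (card D))"
  proof (rule sum.group[symmetric])
    show "card ` Pow T \<subseteq> {..card T}" using assms by (auto intro: card_mono)
  qed (use assms in simp_all)
  also have "\<dots> = (\<Sum>j\<le>card T. of_nat (card T choose j) * f j)"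
  proof (intro sum.cong refl)
    fix j
    have "{D \<in> Pow T. card D = j} = {D. D \<subseteq> T \<and> card D = j}" by blast
    then have "card {D \<in> Pow T. card D = j} = card T choose j" using n_subsets[OF assms] by simp
    moreover have "(\<Sum>D\<in>{D \<in> Pow T. card D = j}. f (card D)) = (\<Sum>D\<in>{D \<in> Pow T. card D = j}. f j)"
      by (rule sum.cong) simp_all
    ultimately show "(\<Sum>D\<in>{D \<in> Pow T. card D = j}. f (card D)) = of_nat (card T choose j) * f j"
      by simp
  qed
  finally show ?thesis .
qed

lemma sum_subsets_containing:
  fixes f :: "nat \<Rightarrow> 'b::comm_semiring_1"
  assumes "finite S" "a \<in> S"
  shows "(\<Sum>C | a \<in> C \<and> C \<subseteq> S. f (card C)) = (\<Sum>j\<le>card S - 1. of_nat (card S - 1 choose j) * f (j + 1))"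
proof -
  have "{C. a \<in> C \<and> C \<subseteq> S} = insert a ` Pow (S - {a})"
  proof (intro set_eqI iffI)
    fix C assume "C \<in> {C. a \<in> C \<and> C \<subseteq> S}"
    then have "C = insert a (C - {a})" "C - {a} \<in> Pow (S - {a})" by auto
    then show "C \<in> insert a ` Pow (S - {a})" by (rule image_eqI)
  qed (use assms in auto)
  moreover have "inj_on (insert a) (Pow (S - {a}))"
    by (rule inj_onI) (metis Diff_insert_absorb PowD subset_Diff_insert)
  ultimately have "(\<Sum>C | a \<in> C \<and> C \<subseteq> S. f (card C)) = (\<Sum>D\<in>Pow (S - {a}). f (card (insert a D)))"
    by (simp add: sum.reindex)
  also have "\<dots> = (\<Sum>D\<in>Pow (S - {a}). f (card D + 1))"
  proof (intro sum.cong refl)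
    fix D assume "D \<in> Pow (S - {a})"
    then have "finite D" "a \<notin> D" using assms(1) by (auto intro: finite_subset)
    then show "f (card (insert a D)) = f (card D + 1)" by simp
  qed
  also have "\<dots> = (\<Sum>j\<le>card S - 1. of_nat (card S - 1 choose j) * f (j + 1))"
    using sum_Pow_card[of "S - {a}" "\<lambda>k. f (k + 1)"] assms by simp
  finally show ?thesis .
qed

lemma sum_subsets_containing_fact:
  fixes h :: "nat \<Rightarrow> 'b::{comm_semiring_1, semiring_char_0}"
  assumes "finite S" "a \<in> S"
  shows "(\<Sum>C | a \<in> C \<and> C \<subseteq> S. fact (card C - 1) * fact (card S - card C) * h (card C)) =
         fact (card S - 1) * (\<Sum>k=1..card S. h k)"
proof -
  define n where "n = card S - 1"
  have "card S > 0" using assms card_gt_0_iff by blast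
  then have card_S: "card S = n + 1" by (simp add: n_def)
  have "(\<Sum>C | a \<in> C \<and> C \<subseteq> S. fact (card C - 1) * fact (card S - card C) * h (card C)) =
      (\<Sum>j\<le>n. of_nat (n choose j) * (fact j * fact (n - j) * h (j + 1)))"
    using sum_subsets_containing[OF assms, of "\<lambda>k. fact (k - 1) * fact (card S - k) * h k"]
    by (simp add: card_S)
  also have "\<dots> = (\<Sum>j\<le>n. fact n * h (j + 1))"
  proof (intro sum.cong refl)
    fix j assume "j \<in> {..n}"
    then have "of_nat (n choose j) * (fact j * fact (n - j)) = (fact n :: 'b)"
      by (metis atMost_iff binomial_fact_lemma mult.commute of_nat_fact of_nat_mult)
    then show "of_nat (n choose j) * (fact j * fact (n - j) * h (j + 1)) = fact n * h (j + 1)"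
      by (metis mult.assoc)
  qed
  also have "\<dots> = fact n * (\<Sum>k=1..n + 1. h k)"
    by (simp add: sum_distrib_left atMost_atLeast0 sum.shift_bounds_cl_Suc_ivl del: sum.cl_ivl_Suc)
  finally show ?thesis by (simp add: card_S)
qed

definition cycle_weight :: "(nat \<Rightarrow> 'b::comm_monoid_mult) \<Rightarrow> 'a set \<Rightarrow> ('a \<Rightarrow> 'a) \<Rightarrow> 'b" where
  "cycle_weight w S \<sigma> = (\<Prod>c\<in>perm_cycles \<sigma> S. w (card c))"

definition cyclic_perms :: "'a \<Rightarrow> 'a set \<Rightarrow> ('a \<Rightarrow> 'a) set" where
  "cyclic_perms a C = {\<rho>. \<rho> permutes C \<and> orbit \<rho> a = C}"

lemma perm_restrict_orbit_permutes:
  assumes "\<sigma> permutes S" "finite S"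
  shows "perm_restrict \<sigma> (orbit \<sigma> a) permutes orbit \<sigma> a"
proof (rule bij_imp_permutes)
  let ?C = "orbit \<sigma> a"
  have cyc: "cyclic_on \<sigma> ?C" using assms by (rule cyclic_on_orbit)
  have "\<sigma> ` ?C = ?C"
  proof
    show "\<sigma> ` ?C \<subseteq> ?C" using cyclic_on_inI[OF cyc] by blast
    show "?C \<subseteq> \<sigma> ` ?C"
    proof
      fix y assume "y \<in> ?C"
      moreover have "\<sigma> (inv \<sigma> y) = y" using assms(1) by (rule permutes_inverses(1))
      ultimately have "inv \<sigma> y \<in> ?C" using cyclic_on_f_in[OF assms(1) cyc] by metis
      then show "y \<in> \<sigma> ` ?C" using \<open>\<sigma> (inv \<sigma> y) = y\<close> by (metis image_eqI)
    qed
  qed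
  then have "bij_betw \<sigma> ?C ?C" using permutes_inj_on[OF assms(1)] by (simp add: bij_betw_def)
  then show "bij_betw (perm_restrict \<sigma> ?C) ?C ?C" by (rule bij_betw_cong[THEN iffD1, rotated]) (simp add: perm_restrict_simps)
  show "perm_restrict \<sigma> ?C x = x" if "x \<notin> ?C" for x using that by (rule perm_restrict_simps)
qed

lemma orbit_comp_inner:
  assumes "\<rho> permutes C" "\<tau> permutes S - C" "a \<in> C"
  shows "orbit (\<tau> \<circ> \<rho>) a = orbit \<rho> a"
proof (rule orbit_cong0[OF assms(3)])
  show "\<tau> \<circ> \<rho> \<in> C \<rightarrow> C" "\<And>y. y \<in> C \<Longrightarrow> (\<tau> \<circ> \<rho>) y = \<rho> y"
    using permutes_in_image[OF assms(1)] permutes_not_in[OF assms(2)] by auto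
qed

lemma orbit_comp_outer:
  assumes "\<rho> permutes C" "\<tau> permutes S - C" "i \<in> S - C"
  shows "orbit (\<tau> \<circ> \<rho>) i = orbit \<tau> i"
proof (rule orbit_cong0[OF assms(3)])
  show "\<tau> \<circ> \<rho> \<in> S - C \<rightarrow> S - C" "\<And>y. y \<in> S - C \<Longrightarrow> (\<tau> \<circ> \<rho>) y = \<tau> y"
    using permutes_in_image[OF assms(2)] permutes_not_in[OF assms(1)] by auto
qed

lemma perm_cycles_compose:
  assumes "finite S" "\<rho> \<in> cyclic_perms a C" "\<tau> permutes S - C" "a \<in> C" "C \<subseteq> S"
  shows "perm_cycles (\<tau> \<circ> \<rho>) S = insert C (perm_cycles \<tau> (S - C))"
    and "C \<notin> perm_cycles \<tau> (S - C)"
proof -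
  have \<rho>: "\<rho> permutes C" "orbit \<rho> a = C" using assms(2) by (auto simp: cyclic_perms_def)
  have perm: "permutation (\<tau> \<circ> \<rho>)"
    using permutes_compose[OF permutes_subset[OF \<rho>(1) assms(5)] permutes_subset[OF assms(3)]] assms(1)
    by (auto simp: permutation_permutes)
  have "orbit (\<tau> \<circ> \<rho>) i = C" if "i \<in> C" for i
    using orbit_eq_if_mem_orbit[OF perm, of i a] orbit_comp_inner[OF \<rho>(1) assms(3,4)] \<rho>(2) that
    by simp
  moreover have "orbit (\<tau> \<circ> \<rho>) i = orbit \<tau> i" if "i \<in> S - C" for i
    using orbit_comp_outer[OF \<rho>(1) assms(3) that] .
  moreover have "S = C \<union> (S - C)" using assms(5) by blast
  ultimately show "perm_cycles (\<tau> \<circ> \<rho>) S = insert C (perm_cycles \<tau> (S - C))"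
    unfolding perm_cycles_def using assms(4) by (metis (no_types, lifting) image_Un image_cong
      image_constant insert_is_Un)
  show "C \<notin> perm_cycles \<tau> (S - C)"
  proof
    assume "C \<in> perm_cycles \<tau> (S - C)"
    then obtain i where "i \<in> S - C" "C = orbit \<tau> i" by (auto simp: perm_cycles_def)
    moreover have "i \<in> orbit \<tau> i"
      using assms(1,3) by (intro permutation_self_in_orbit) (auto simp: permutation_permutes)
    ultimately show False by simp
  qed
qed

lemma cycle_weight_compose:
  assumes "finite S" "\<rho> \<in> cyclic_perms a C" "\<tau> permutes S - C" "a \<in> C" "C \<subseteq> S"
  shows "cycle_weight w S (\<tau> \<circ> \<rho>) = w (card C) * cycle_weight w (S - C) \<tau>"
proof -
  have "finite (perm_cycles \<tau> (S - C))" using assms(1) by (simp add: perm_cycles_def)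
  then show ?thesis
    using perm_cycles_compose[OF assms] by (simp add: cycle_weight_def)
qed

lemma perm_restrict_orbit_mem_cyclic_perms:
  assumes "\<sigma> permutes S" "finite S"
  shows "perm_restrict \<sigma> (orbit \<sigma> a) \<in> cyclic_perms a (orbit \<sigma> a)"
proof -
  have "a \<in> orbit \<sigma> a"
    using assms by (intro permutation_self_in_orbit) (auto simp: permutation_permutes)
  then have "orbit (perm_restrict \<sigma> (orbit \<sigma> a)) a = orbit \<sigma> a"
    by (rule orbit_cong0) (auto simp: perm_restrict_simps orbit.step)
  then show ?thesis using perm_restrict_orbit_permutes[OF assms] by (simp add: cyclic_perms_def)
qed

lemma perm_restrict_comp_disjoint:
  assumes "\<rho> permutes C" "\<tau> permutes S - C"
  shows "perm_restrict (\<tau> \<circ> \<rho>) C = \<rho>" and "perm_restrict (\<tau> \<circ> \<rho>) (S - C) = \<tau>"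
proof -
  have "\<rho> x \<in> C" if "x \<in> C" for x using permutes_in_image[OF assms(1)] that by simp
  then show "perm_restrict (\<tau> \<circ> \<rho>) C = \<rho>" "perm_restrict (\<tau> \<circ> \<rho>) (S - C) = \<tau>"
    using permutes_not_in[OF assms(1)] permutes_not_in[OF assms(2)]
    by (auto simp: perm_restrict_def fun_eq_iff)
qed

lemma perm_restrict_comp_orbit:
  assumes "\<sigma> permutes S" "finite S" "a \<in> S"
  shows "perm_restrict \<sigma> (S - orbit \<sigma> a) \<circ> perm_restrict \<sigma> (orbit \<sigma> a) = \<sigma>"
proof -
  have "perm_restrict \<sigma> (S - orbit \<sigma> a) \<circ> perm_restrict \<sigma> (orbit \<sigma> a) =
      perm_restrict \<sigma> ((S - orbit \<sigma> a) \<union> orbit \<sigma> a)"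
    using cyclic_on_orbit[OF assms(1,2)] by (intro perm_restrict_comp) auto
  also have "(S - orbit \<sigma> a) \<union> orbit \<sigma> a = S" using permutes_orbit_subset[OF assms(1,3)] by blast
  finally show ?thesis using assms(1) by (simp add: fun_eq_iff)
qed

lemma bij_betw_comp_cyclic_perms:
  assumes "finite S" "a \<in> C" "C \<subseteq> S"
  shows "bij_betw (\<lambda>(\<rho>, \<tau>). \<tau> \<circ> \<rho>) (cyclic_perms a C \<times> {\<tau>. \<tau> permutes S - C})
           {\<sigma>. \<sigma> permutes S \<and> orbit \<sigma> a = C}"
proof (rule bij_betw_byWitness[where f' = "\<lambda>\<sigma>. (perm_restrict \<sigma> C, perm_restrict \<sigma> (S - C))"])
  show "\<forall>p\<in>cyclic_perms a C \<times> {\<tau>. \<tau> permutes S - C}.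
      (\<lambda>\<sigma>. (perm_restrict \<sigma> C, perm_restrict \<sigma> (S - C))) ((\<lambda>(\<rho>, \<tau>). \<tau> \<circ> \<rho>) p) = p"
    by (auto simp: cyclic_perms_def perm_restrict_comp_disjoint)
  show "\<forall>\<sigma>\<in>{\<sigma>. \<sigma> permutes S \<and> orbit \<sigma> a = C}.
      (\<lambda>(\<rho>, \<tau>). \<tau> \<circ> \<rho>) (perm_restrict \<sigma> C, perm_restrict \<sigma> (S - C)) = \<sigma>"
    using perm_restrict_comp_orbit[OF _ assms(1)] assms(2,3) by auto
  show "(\<lambda>(\<rho>, \<tau>). \<tau> \<circ> \<rho>) ` (cyclic_perms a C \<times> {\<tau>. \<tau> permutes S - C}) \<subseteq>
      {\<sigma>. \<sigma> permutes S \<and> orbit \<sigma> a = C}"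
  proof
    fix \<sigma> assume "\<sigma> \<in> (\<lambda>(\<rho>, \<tau>). \<tau> \<circ> \<rho>) ` (cyclic_perms a C \<times> {\<tau>. \<tau> permutes S - C})"
    then obtain \<rho> \<tau> where \<sigma>: "\<sigma> = \<tau> \<circ> \<rho>" and \<rho>: "\<rho> permutes C" "orbit \<rho> a = C"
      and \<tau>: "\<tau> permutes S - C" by (auto simp: cyclic_perms_def)
    show "\<sigma> \<in> {\<sigma>. \<sigma> permutes S \<and> orbit \<sigma> a = C}"
      using permutes_compose[OF permutes_subset[OF \<rho>(1) assms(3)] permutes_subset[OF \<tau>]]
        orbit_comp_inner[OF \<rho>(1) \<tau> assms(2)] \<rho>(2) \<sigma> by auto
  qed
  show "(\<lambda>\<sigma>. (perm_restrict \<sigma> C, perm_restrict \<sigma> (S - C))) ` {\<sigma>. \<sigma> permutes S \<and> orbit \<sigma> a = C}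
      \<subseteq> cyclic_perms a C \<times> {\<tau>. \<tau> permutes S - C}"
    using perm_restrict_orbit_mem_cyclic_perms[OF _ assms(1)]
      perm_restrict_diff_cyclic[OF _ cyclic_on_orbit[OF _ assms(1)]] by auto
qed

lemma sum_cycle_weight_by_cycle_of:
  fixes w :: "nat \<Rightarrow> 'b::comm_semiring_1"
  assumes "finite S" "a \<in> S"
  shows "(\<Sum>\<sigma> | \<sigma> permutes S. cycle_weight w S \<sigma>) =
         (\<Sum>C | a \<in> C \<and> C \<subseteq> S. of_nat (card (cyclic_perms a C)) * w (card C) *
            (\<Sum>\<tau> | \<tau> permutes S - C. cycle_weight w (S - C) \<tau>))"
proof -
  have perm: "permutation \<sigma>" if "\<sigma> permutes S" for \<sigma>
    using that assms(1) by (auto simp: permutation_permutes)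
  have "(\<Sum>\<sigma> | \<sigma> permutes S. cycle_weight w S \<sigma>) =
      (\<Sum>C | a \<in> C \<and> C \<subseteq> S. \<Sum>\<sigma> \<in> {\<sigma> \<in> {\<sigma>. \<sigma> permutes S}. orbit \<sigma> a = C}. cycle_weight w S \<sigma>)"
  proof (rule sum.group[symmetric])
    show "finite {\<sigma>. \<sigma> permutes S}" by (rule finite_permutations[OF assms(1)])
    show "finite {C. a \<in> C \<and> C \<subseteq> S}" using assms(1) by (simp add: finite_subset[of _ "Pow S"])
    show "(\<lambda>\<sigma>. orbit \<sigma> a) ` {\<sigma>. \<sigma> permutes S} \<subseteq> {C. a \<in> C \<and> C \<subseteq> S}"
      using permutation_self_in_orbit[OF perm] permutes_orbit_subset[OF _ assms(2)] by blast
  qed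
  also have "\<dots> = (\<Sum>C | a \<in> C \<and> C \<subseteq> S. of_nat (card (cyclic_perms a C)) * w (card C) *
      (\<Sum>\<tau> | \<tau> permutes S - C. cycle_weight w (S - C) \<tau>))"
  proof (intro sum.cong refl)
    fix C assume "C \<in> {C. a \<in> C \<and> C \<subseteq> S}"
    then have C: "a \<in> C" "C \<subseteq> S" by auto
    have "{\<sigma> \<in> {\<sigma>. \<sigma> permutes S}. orbit \<sigma> a = C} = {\<sigma>. \<sigma> permutes S \<and> orbit \<sigma> a = C}" by blast
    then have "(\<Sum>\<sigma> \<in> {\<sigma> \<in> {\<sigma>. \<sigma> permutes S}. orbit \<sigma> a = C}. cycle_weight w S \<sigma>) =
        (\<Sum>(\<rho>, \<tau>) \<in> cyclic_perms a C \<times> {\<tau>. \<tau> permutes S - C}. cycle_weight w S (\<tau> \<circ> \<rho>))"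
      using sum.reindex_bij_betw[OF bij_betw_comp_cyclic_perms[OF assms(1) C], symmetric]
      by (simp add: case_prod_beta')
    also have "\<dots> = (\<Sum>(\<rho>, \<tau>) \<in> cyclic_perms a C \<times> {\<tau>. \<tau> permutes S - C}.
        w (card C) * cycle_weight w (S - C) \<tau>)"
      by (intro sum.cong refl) (auto simp: cycle_weight_compose[OF assms(1) _ _ C])
    also have "\<dots> = of_nat (card (cyclic_perms a C)) * w (card C) *
        (\<Sum>\<tau> | \<tau> permutes S - C. cycle_weight w (S - C) \<tau>)"
      by (simp add: sum.cartesian_product[symmetric] sum_distrib_left mult.assoc)
    finally show "(\<Sum>\<sigma> \<in> {\<sigma> \<in> {\<sigma>. \<sigma> permutes S}. orbit \<sigma> a = C}. cycle_weight w S \<sigma>) = \<dots>" .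
  qed
  finally show ?thesis .
qed

lemma sum_cycle_weight_one: "finite S \<Longrightarrow> (\<Sum>\<sigma> | \<sigma> permutes S. cycle_weight (\<lambda>_. 1) S \<sigma>) = fact (card S)"
  by (simp add: cycle_weight_def card_permutations)

text \<open>Both sides count the permutations of C, the left one by the cycle through a.\<close>

lemma sum_card_cyclic_perms:
  assumes "finite C" "a \<in> C"
  shows "(\<Sum>C' | a \<in> C' \<and> C' \<subseteq> C. card (cyclic_perms a C') * fact (card C - card C')) =
         (\<Sum>C' | a \<in> C' \<and> C' \<subseteq> C. fact (card C' - 1) * fact (card C - card C'))"
proof -
  have fact_rest: "(\<Sum>\<tau> | \<tau> permutes C - C'. cycle_weight (\<lambda>_. 1 :: nat) (C - C') \<tau>) =
      fact (card C - card C')" if "C' \<subseteq> C" for C'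
  proof -
    have "card (C - C') = card C - card C'"
      using that assms(1) by (intro card_Diff_subset) (auto intro: finite_subset)
    moreover have "(\<Sum>\<tau> | \<tau> permutes C - C'. cycle_weight (\<lambda>_. 1 :: nat) (C - C') \<tau>) = fact (card (C - C'))"
      by (rule sum_cycle_weight_one) (use assms(1) in simp)
    ultimately show ?thesis by (simp only:)
  qed
  have "(\<Sum>C' | a \<in> C' \<and> C' \<subseteq> C. card (cyclic_perms a C') * fact (card C - card C')) =
      (\<Sum>C' | a \<in> C' \<and> C' \<subseteq> C. of_nat (card (cyclic_perms a C')) * 1 *
        (\<Sum>\<tau> | \<tau> permutes C - C'. cycle_weight (\<lambda>_. 1 :: nat) (C - C') \<tau>))"
    by (intro sum.cong refl) (simp only: fact_rest of_nat_id mult_1_right mem_Collect_eq)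
  also have "\<dots> = (\<Sum>\<sigma> | \<sigma> permutes C. cycle_weight (\<lambda>_. 1 :: nat) C \<sigma>)"
    by (rule sum_cycle_weight_by_cycle_of[OF assms, symmetric])
  also have "\<dots> = fact (card C)" by (rule sum_cycle_weight_one[OF assms(1)])
  also have "\<dots> = fact (card C - 1) * (\<Sum>k=1..card C. 1)"
  proof -
    have "card C > 0" using assms card_gt_0_iff by blast
    then show ?thesis by (simp add: fact_reduce[of "card C"] mult.commute)
  qed
  also have "\<dots> = (\<Sum>C' | a \<in> C' \<and> C' \<subseteq> C. fact (card C' - 1) * fact (card C - card C'))"
    using sum_subsets_containing_fact[OF assms, of "\<lambda>_. 1 :: nat"] by simp
  finally show ?thesis .
qed

lemma card_cyclic_perms:
  assumes "finite C" "a \<in> C"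
  shows "card (cyclic_perms a C) = fact (card C - 1)"
  using assms
proof (induction "card C" arbitrary: C rule: less_induct)
  case less
  define T where "T = {C'. a \<in> C' \<and> C' \<subseteq> C}"
  have "finite T" using less.prems(1) unfolding T_def by (simp add: finite_subset[of _ "Pow C"])
  have "C \<in> T" using less.prems(2) by (simp add: T_def)
  have "card (cyclic_perms a C') = fact (card C' - 1)" if "C' \<in> T - {C}" for C'
  proof (rule less.hyps)
    have "C' \<subset> C" "a \<in> C'" using that by (auto simp: T_def)
    then show "card C' < card C" "finite C'" "a \<in> C'"
      using less.prems(1) by (auto intro: psubset_card_mono finite_subset)
  qed
  then have rest: "(\<Sum>C'\<in>T - {C}. card (cyclic_perms a C') * fact (card C - card C')) =
      (\<Sum>C'\<in>T - {C}. fact (card C' - 1) * fact (card C - card C'))" by simp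
  have "card (cyclic_perms a C) * fact (card C - card C) +
      (\<Sum>C'\<in>T - {C}. card (cyclic_perms a C') * fact (card C - card C')) =
      (\<Sum>C'\<in>T. card (cyclic_perms a C') * fact (card C - card C'))"
    by (rule sum.remove[OF \<open>finite T\<close> \<open>C \<in> T\<close>, symmetric])
  also have "\<dots> = (\<Sum>C'\<in>T. fact (card C' - 1) * fact (card C - card C'))"
    unfolding T_def by (rule sum_card_cyclic_perms[OF less.prems])
  also have "\<dots> = fact (card C - 1) * fact (card C - card C) +
      (\<Sum>C'\<in>T - {C}. card (cyclic_perms a C') * fact (card C - card C'))"
    unfolding rest by (rule sum.remove[OF \<open>finite T\<close> \<open>C \<in> T\<close>])
  finally have "card (cyclic_perms a C) * fact (card C - card C) = fact (card C - 1) * fact (card C - card C)"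
    by (rule add_right_imp_eq)
  then show ?case by simp
qed

text \<open>The recurrence for g is the coefficient form of \<open>g' = (\<Sum>\<^sub>k w\<^sub>k t^(k-1)) g\<close>,
  i.e. \<open>g = exp (\<Sum>\<^sub>k w\<^sub>k t^k / k)\<close>.\<close>

lemma exponential_formula:
  fixes w g :: "nat \<Rightarrow> 'b::{comm_semiring_1, semiring_char_0}"
  assumes g0: "g 0 = 1"
    and rec: "\<And>m. m \<ge> 1 \<Longrightarrow> of_nat m * g m = (\<Sum>k=1..m. w k * g (m - k))"
    and "finite S"
  shows "(\<Sum>\<sigma> | \<sigma> permutes S. cycle_weight w S \<sigma>) = fact (card S) * g (card S)"
  using \<open>finite S\<close>
proof (induction "card S" arbitrary: S rule: less_induct)
  case less
  show ?case
  proof (cases "S = {}")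
    case True
    then show ?thesis by (simp add: cycle_weight_def perm_cycles_def g0)
  next
    case False
    then obtain a where a: "a \<in> S" by blast
    define n where "n = card S"
    have "n \<ge> 1" using less.prems False by (simp add: n_def Suc_le_eq card_gt_0_iff)
    have "(\<Sum>\<sigma> | \<sigma> permutes S. cycle_weight w S \<sigma>) =
        (\<Sum>C | a \<in> C \<and> C \<subseteq> S. fact (card C - 1) * fact (n - card C) * (w (card C) * g (n - card C)))"
      unfolding sum_cycle_weight_by_cycle_of[OF less.prems a]
    proof (intro sum.cong refl)
      fix C assume "C \<in> {C. a \<in> C \<and> C \<subseteq> S}"
      then have C: "a \<in> C" "C \<subseteq> S" "finite C" using less.prems by (auto intro: finite_subset)
      then have "card C > 0" by (auto simp: card_gt_0_iff)
      then have "card (S - C) = n - card C" "card (S - C) < card S"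
        using C less.prems \<open>n \<ge> 1\<close> by (auto simp: n_def card_Diff_subset)
      then have "(\<Sum>\<tau> | \<tau> permutes S - C. cycle_weight w (S - C) \<tau>) = fact (n - card C) * g (n - card C)"
        using less.hyps[of "S - C"] less.prems by simp
      then show "of_nat (card (cyclic_perms a C)) * w (card C) * (\<Sum>\<tau> | \<tau> permutes S - C. cycle_weight w (S - C) \<tau>) =
          fact (card C - 1) * fact (n - card C) * (w (card C) * g (n - card C))"
        using card_cyclic_perms[OF C(3,1)] by (simp add: mult_ac)
    qed
    also have "\<dots> = fact (n - 1) * (\<Sum>k=1..n. w k * g (n - k))"
      using sum_subsets_containing_fact[OF less.prems a] by (simp add: n_def)
    also have "\<dots> = fact (n - 1) * (of_nat n * g n)" using rec[OF \<open>n \<ge> 1\<close>] by simp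
    also have "\<dots> = fact n * g n" using \<open>n \<ge> 1\<close> by (simp add: fact_reduce[of n] mult_ac)
    finally show ?thesis by (simp add: n_def)
  qed
qed

section \<open>The generating function of the Schur Q-functions\<close>

unbundle fps_syntax

definition geometric_fps :: "'a::comm_ring_1 \<Rightarrow> 'a fps" where
  "geometric_fps c = Abs_fps (\<lambda>n. c ^ n)"

text \<open>\<open>schurQ_gf N x = 1 + 2 \<Sum>\<^sub>n P\<^sub>n t^n\<close>, and \<open>psum_shift N x k\<close> is the shiftification
  \<open>p\<^sub>k(x/x)\<close>.\<close>

definition schurQ_gf :: "nat \<Rightarrow> (nat \<Rightarrow> real) \<Rightarrow> real fps" where
  "schurQ_gf N x = (\<Prod>i<N. (1 + fps_const (x i) * fps_X) / (1 - fps_const (x i) * fps_X))"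

definition psum_shift :: "nat \<Rightarrow> (nat \<Rightarrow> real) \<Rightarrow> nat \<Rightarrow> real" where
  "psum_shift N x k = (if odd k then 2 * psum N x k else 0)"

lemma SchurP_conv_schurQ_gf: "SchurP N x k = schurQ_gf N x $ k / 2"
  by (simp add: SchurP_def schurQ_gf_def)

lemma one_minus_mult_geometric_fps: "(1 - fps_const c * fps_X) * geometric_fps c = 1"
proof (rule fps_ext)
  fix n
  show "((1 - fps_const c * fps_X) * geometric_fps c) $ n = (1 :: 'a fps) $ n"
    by (cases n) (simp_all add: geometric_fps_def algebra_simps)
qed

lemma fps_deriv_geometric_fps:
  "fps_deriv (geometric_fps (c :: 'a::comm_ring_1)) = fps_const c * geometric_fps c * geometric_fps c"
proof (rule fps_ext)
  fix n
  have "(geometric_fps c * geometric_fps c) $ n = (\<Sum>i=0..n. c ^ n)"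
    unfolding fps_mult_nth geometric_fps_def by (intro sum.cong refl) (simp add: power_add[symmetric])
  then show "fps_deriv (geometric_fps c) $ n = (fps_const c * geometric_fps c * geometric_fps c) $ n"
    by (simp add: geometric_fps_def mult.assoc)
qed

lemma fps_deriv_one_plus_mult_geometric_fps:
  fixes c :: "'a::comm_ring_1"
  shows "fps_deriv ((1 + fps_const c * fps_X) * geometric_fps c) =
    fps_const c * (geometric_fps c + geometric_fps (- c)) * ((1 + fps_const c * fps_X) * geometric_fps c)"
proof -
  have "1 - fps_const (- c) * fps_X = 1 + fps_const c * fps_X"
    by (simp del: fps_const_neg add: fps_const_neg[symmetric])
  then have inverse: "(1 + fps_const c * fps_X) * geometric_fps (- c) = 1"
    using one_minus_mult_geometric_fps[of "- c"] by (simp only:)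
  have "fps_const c * (geometric_fps c + geometric_fps (- c)) * ((1 + fps_const c * fps_X) * geometric_fps c) =
      fps_const c * geometric_fps c * ((1 + fps_const c * fps_X) * geometric_fps c) +
      fps_const c * geometric_fps c * ((1 + fps_const c * fps_X) * geometric_fps (- c))"
    by (simp add: algebra_simps)
  also have "\<dots> = fps_const c * geometric_fps c * ((1 + fps_const c * fps_X) * geometric_fps c) +
      fps_const c * geometric_fps c"
    by (simp only: inverse mult_1_right)
  also have "\<dots> = fps_deriv ((1 + fps_const c * fps_X) * geometric_fps c)"
    by (simp add: fps_deriv_geometric_fps algebra_simps)
  finally show ?thesis by simp
qed

lemma fps_deriv_prod_eq_sum_mult:
  fixes f h :: "'i \<Rightarrow> 'a::comm_ring_1 fps"
  assumes "finite I" "\<And>i. i \<in> I \<Longrightarrow> fps_deriv (f i) = h i * f i"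
  shows "fps_deriv (\<Prod>i\<in>I. f i) = (\<Sum>i\<in>I. h i) * (\<Prod>i\<in>I. f i)"
  using assms by (induction I rule: finite_induct) (simp_all add: algebra_simps)

lemma fps_deriv_power_eq_mult:
  fixes A H :: "'a::comm_ring_1 fps"
  assumes "fps_deriv A = H * A"
  shows "fps_deriv (A ^ k) = (of_nat k * H) * A ^ k"
  by (induction k) (simp_all add: assms algebra_simps)

lemma fps_deriv_schurQ_gf:
  "fps_deriv (schurQ_gf N x) = Abs_fps (\<lambda>j. psum_shift N x (j + 1)) * schurQ_gf N x"
proof -
  have factor: "(1 + fps_const c * fps_X) / (1 - fps_const c * fps_X) = (1 + fps_const c * fps_X) * geometric_fps c"
    for c :: real
  proof -
    have "inverse (1 - fps_const c * fps_X) = geometric_fps c"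
      by (rule fps_inverse_unique[OF one_minus_mult_geometric_fps])
    then show ?thesis by (subst fps_divide_unit) auto
  qed
  have "(\<Sum>i<N. fps_const (x i) * (geometric_fps (x i) + geometric_fps (- x i))) $ j = psum_shift N x (j + 1)" for j
  proof (cases "even j")
    case True
    then show ?thesis
      by (simp add: fps_sum_nth geometric_fps_def psum_shift_def psum_def sum_distrib_left mult_ac)
  next
    case False
    then show ?thesis by (simp add: fps_sum_nth geometric_fps_def psum_shift_def)
  qed
  then have "(\<Sum>i<N. fps_const (x i) * (geometric_fps (x i) + geometric_fps (- x i))) =
      Abs_fps (\<lambda>j. psum_shift N x (j + 1))" by (intro fps_ext) simp
  moreover have "fps_deriv (schurQ_gf N x) =
      (\<Sum>i<N. fps_const (x i) * (geometric_fps (x i) + geometric_fps (- x i))) * schurQ_gf N x"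
    unfolding schurQ_gf_def factor
    by (rule fps_deriv_prod_eq_sum_mult) (simp_all only: fps_deriv_one_plus_mult_geometric_fps finite_lessThan)
  ultimately show ?thesis by simp
qed

lemma schurQ_gf_nth_0: "schurQ_gf N x $ 0 = 1"
  by (induction N) (simp_all add: schurQ_gf_def fps_divide_unit fps_inverse_def)

lemma schurQ_gf_power_recurrence:
  assumes "m \<ge> 1"
  shows "of_nat m * (schurQ_gf N x ^ l) $ m =
         (\<Sum>k=1..m. (of_nat l * psum_shift N x k) * (schurQ_gf N x ^ l) $ (m - k))"
proof -
  define G where "G = schurQ_gf N x ^ l"
  define H where "H = Abs_fps (\<lambda>j. psum_shift N x (j + 1))"
  have deriv: "fps_deriv G = (of_nat l * H) * G"
    unfolding G_def H_def by (rule fps_deriv_power_eq_mult[OF fps_deriv_schurQ_gf])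
  have "of_nat m * G $ m = fps_deriv G $ (m - 1)" using assms by simp
  also have "\<dots> = (fps_const (of_nat l) * H * G) $ (m - 1)"
    by (simp only: deriv fps_of_nat)
  also have "\<dots> = of_nat l * (H * G) $ (m - 1)"
    by (simp only: mult.assoc fps_mult_left_const_nth)
  also have "\<dots> = (\<Sum>i=0..m - 1. of_nat l * psum_shift N x (i + 1) * G $ (m - 1 - i))"
    by (simp add: fps_mult_nth H_def sum_distrib_left mult.assoc)
  also have "\<dots> = (\<Sum>k=1..m. of_nat l * psum_shift N x k * G $ (m - k))"
    using assms by (intro sum.reindex_bij_witness[of _ "\<lambda>k. k - 1" Suc]) auto
  finally show ?thesis unfolding G_def .
qed

section \<open>Coefficients of powers via compositions\<close>

definition compositions :: "nat \<Rightarrow> nat list set" where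
  "compositions n = {xs. set xs \<subseteq> {1..} \<and> sum_list xs = n}"

lemma length_le_sum_list: "set xs \<subseteq> {1..} \<Longrightarrow> length xs \<le> sum_list (xs :: nat list)"
  by (induction xs) auto

lemma finite_compositions: "finite (compositions n)"
proof (rule finite_subset)
  show "compositions n \<subseteq> {xs. set xs \<subseteq> {..n} \<and> length xs \<le> n}"
    unfolding compositions_def using length_le_sum_list member_le_sum_list by fastforce
  show "finite {xs. set xs \<subseteq> {..n} \<and> length xs \<le> n}" by (rule finite_lists_length_le) simp
qed

lemma mset_compositions: "mset ` compositions n = partitions n"
proof
  show "mset ` compositions n \<subseteq> partitions n"
    by (auto simp: compositions_def partitions_def sum_mset_sum_list)
  show "partitions n \<subseteq> mset ` compositions n"
  proof
    fix la assume la: "la \<in> partitions n"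
    obtain xs where xs: "mset xs = la" using ex_mset by blast
    then have "xs \<in> compositions n"
      using la by (auto simp: partitions_def compositions_def sum_mset_sum_list[symmetric])
    then show "la \<in> mset ` compositions n" using xs by blast
  qed
qed

lemma finite_partitions: "finite (partitions n)"
  using finite_compositions mset_compositions by (metis finite_imageI)

lemma sum_compositions_by_partitions:
  fixes g :: "nat multiset \<Rightarrow> 'a::comm_semiring_1"
  shows "(\<Sum>xs\<in>compositions n. g (mset xs)) =
         (\<Sum>la\<in>partitions n. of_nat (card (permutations_of_multiset la)) * g la)"
proof -
  have "(\<Sum>xs\<in>compositions n. g (mset xs)) =
      (\<Sum>la\<in>partitions n. \<Sum>xs\<in>{xs \<in> compositions n. mset xs = la}. g (mset xs))"
    by (rule sum.group[symmetric]) (simp_all add: finite_compositions finite_partitions mset_compositions)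
  also have "\<dots> = (\<Sum>la\<in>partitions n. of_nat (card (permutations_of_multiset la)) * g la)"
  proof (intro sum.cong refl)
    fix la assume "la \<in> partitions n"
    then have "{xs \<in> compositions n. mset xs = la} = permutations_of_multiset la"
      by (auto simp: permutations_of_multiset_def compositions_def partitions_def
          sum_mset_sum_list[symmetric])
    moreover have "(\<Sum>xs\<in>permutations_of_multiset la. g (mset xs)) =
        (\<Sum>xs\<in>permutations_of_multiset la. g la)"
      by (intro sum.cong) (auto simp: permutations_of_multiset_def)
    ultimately show "(\<Sum>xs\<in>{xs \<in> compositions n. mset xs = la}. g (mset xs)) =
        of_nat (card (permutations_of_multiset la)) * g la" by simp
  qed
  finally show ?thesis .
qed

lemma fps_power_nth_compositions:
  fixes A :: "'a::comm_semiring_1 fps"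
  assumes "A $ 0 = 0"
  shows "(A ^ l) $ n = (\<Sum>xs | xs \<in> compositions n \<and> length xs = l. \<Prod>k\<leftarrow>xs. A $ k)"
proof (induction l arbitrary: n)
  case 0
  have "{xs. xs \<in> compositions n \<and> length xs = 0} = (if n = 0 then {[]} else {})"
    by (auto simp: compositions_def)
  then show ?case by simp
next
  case (Suc l)
  define C where "C n = {xs. xs \<in> compositions n \<and> length xs = l}" for n
  have "(A ^ Suc l) $ n = (\<Sum>i=0..n. A $ i * (A ^ l) $ (n - i))" by (simp add: fps_mult_nth)
  also have "\<dots> = (\<Sum>i=1..n. A $ i * (A ^ l) $ (n - i))"
    using assms by (simp add: sum.atLeast_Suc_atMost)
  also have "\<dots> = (\<Sum>i=1..n. \<Sum>ys\<in>C (n - i). A $ i * (\<Prod>k\<leftarrow>ys. A $ k))"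
    by (simp add: Suc C_def sum_distrib_left)
  also have "\<dots> = (\<Sum>(i, ys)\<in>Sigma {1..n} (\<lambda>i. C (n - i)). A $ i * (\<Prod>k\<leftarrow>ys. A $ k))"
    by (rule sum.Sigma) (auto simp: C_def intro: finite_subset[OF _ finite_compositions])
  also have "\<dots> = (\<Sum>xs | xs \<in> compositions n \<and> length xs = Suc l. \<Prod>k\<leftarrow>xs. A $ k)"
  proof (rule sum.reindex_bij_witness[where i = "\<lambda>xs. (hd xs, tl xs)" and j = "\<lambda>(i, ys). i # ys"])
    fix xs assume "xs \<in> {xs. xs \<in> compositions n \<and> length xs = Suc l}"
    then show "(hd xs, tl xs) \<in> Sigma {1..n} (\<lambda>i. C (n - i))" "(\<lambda>(i, ys). i # ys) (hd xs, tl xs) = xs"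
      by (cases xs; auto simp: compositions_def C_def)+
  qed (auto simp: compositions_def C_def)
  finally show ?case .
qed

lemma fps_power_nth_binomial_compositions:
  fixes A :: "'a::comm_ring_1 fps"
  assumes "A $ 0 = 1"
  shows "(A ^ N) $ n = (\<Sum>xs\<in>compositions n. of_nat (N choose length xs) * (\<Prod>k\<leftarrow>xs. A $ k))"
proof -
  define T where "T l = (\<Sum>xs | xs \<in> compositions n \<and> length xs = l. \<Prod>k\<leftarrow>xs. A $ k)" for l
  have T: "((A - 1) ^ l) $ n = T l" for l
  proof -
    have "((A - 1) ^ l) $ n = (\<Sum>xs | xs \<in> compositions n \<and> length xs = l. \<Prod>k\<leftarrow>xs. (A - 1) $ k)"
      by (rule fps_power_nth_compositions) (simp add: assms)
    also have "\<dots> = T l"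
      unfolding T_def by (intro sum.cong refl arg_cong[where f = prod_list] map_cong)
        (auto simp: compositions_def)
    finally show ?thesis .
  qed
  have "A ^ N = ((A - 1) + 1) ^ N" by simp
  also have "\<dots> = (\<Sum>l\<le>N. of_nat (N choose l) * (A - 1) ^ l * 1 ^ (N - l))" by (rule binomial_ring)
  finally have "(A ^ N) $ n = (\<Sum>l\<le>N. (of_nat (N choose l) * (A - 1) ^ l) $ n)"
    by (simp add: fps_sum_nth)
  also have "\<dots> = (\<Sum>l\<le>N. of_nat (N choose l) * T l)"
    by (intro sum.cong refl) (simp only: T fps_of_nat[symmetric] fps_mult_left_const_nth)
  also have "\<dots> = (\<Sum>l\<le>N + n. of_nat (N choose l) * T l)"
  proof (rule sum.mono_neutral_left)
    show "\<forall>l\<in>{..N + n} - {..N}. of_nat (N choose l) * T l = 0"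
      by (auto simp: binomial_eq_0)
  qed auto
  also have "\<dots> = (\<Sum>l\<le>N + n. \<Sum>xs | xs \<in> compositions n \<and> length xs = l.
      of_nat (N choose length xs) * (\<Prod>k\<leftarrow>xs. A $ k))"
    by (simp add: T_def sum_distrib_left)
  also have "\<dots> = (\<Sum>xs\<in>compositions n. of_nat (N choose length xs) * (\<Prod>k\<leftarrow>xs. A $ k))"
  proof (rule sum.group)
    show "length ` compositions n \<subseteq> {..N + n}"
      using length_le_sum_list by (fastforce simp: compositions_def)
  qed (simp_all add: finite_compositions)
  finally show ?thesis .
qed

lemma binomial_mult_fact_eq_prod:
  assumes "1 \<le> l" "l \<le> n + 1"
  shows "real (n + 1 choose l) * fact l = real (n + 1) * (\<Prod>j<l - 1. real (n - j))"
proof -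
  have "real (n + 1 choose l) * fact l = (\<Prod>i<l. real (n + 1) - of_nat i)"
    by (simp add: binomial_gbinomial gbinomial_mult_fact' atLeast0LessThan)
  also have "\<dots> = (\<Prod>i<Suc (l - 1). real (n + 1) - of_nat i)" using assms(1) by simp
  also have "\<dots> = real (n + 1) * (\<Prod>j<l - 1. real (n - j))"
    unfolding prod.lessThan_Suc_shift using assms(2) by simp
  finally show ?thesis .
qed

lemma set_mset_partition: "la \<in> partitions n \<Longrightarrow> set_mset la \<subseteq> {1..n}"
proof
  fix k assume "la \<in> partitions n" "k \<in># la"
  moreover from \<open>k \<in># la\<close> have "k \<le> sum_mset la" by (metis sum_mset.remove le_add1)
  ultimately show "k \<in> {1..n}" by (auto simp: partitions_def)
qed

lemma size_partition:
  assumes "la \<in> partitions n"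
  shows "size la \<le> n" and "n \<ge> 1 \<Longrightarrow> size la \<ge> 1"
proof -
  obtain xs where "xs \<in> compositions n" "la = mset xs" using assms mset_compositions by blast
  then show "size la \<le> n" using length_le_sum_list by (auto simp: compositions_def)
  assume "n \<ge> 1"
  then have "la \<noteq> {#}" using assms by (auto simp: partitions_def)
  then show "size la \<ge> 1" by (simp add: Suc_le_eq nonempty_has_size)
qed

lemma partition_coeff_eq:
  assumes la: "la \<in> partitions n" and "n \<ge> 1"
  shows "(\<Prod>j<size la - 1. real (n - j)) / (\<Prod>i\<in>{1..n}. fact (count la i)) =
         real (card (permutations_of_multiset la)) * real (n + 1 choose size la) / real (n + 1)"
proof -
  define F where "F = (\<Prod>i\<in>set_mset la. fact (count la i) :: real)"
  define c where "c = real (card (permutations_of_multiset la))"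
  define P where "P = (\<Prod>j<size la - 1. real (n - j))"
  define B where "B = real (n + 1 choose size la)"
  have "F \<noteq> 0" by (simp add: F_def)
  have "(\<Prod>i\<in>{1..n}. fact (count la i)) = F"
    unfolding F_def by (rule prod.mono_neutral_right) (use set_mset_partition[OF la] in \<open>auto simp: not_in_iff\<close>)
  moreover have "c * B * F = real (n + 1) * P"
  proof -
    have "c * F = fact (size la)"
      using arg_cong[OF card_permutations_of_multiset_aux[of la], of real] by (simp add: c_def F_def)
    then have "c * B * F = B * fact (size la)" by (simp add: mult_ac)
    also have "\<dots> = real (n + 1) * P"
      using binomial_mult_fact_eq_prod size_partition[OF la] \<open>n \<ge> 1\<close>
      by (simp add: B_def P_def mult.commute)
    finally show ?thesis .
  qed
  ultimately show ?thesis
    using \<open>F \<noteq> 0\<close> unfolding c_def[symmetric] B_def[symmetric] P_def[symmetric]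
    by (simp add: field_simps)
qed

lemma V_conv_schurQ_gf: "V N x la = (\<Prod>k\<in>#la. schurQ_gf N x $ k) / 2 ^ size la"
  unfolding V_def SchurP_conv_schurQ_gf by (induction la) (simp_all add: field_simps)

lemma partition_sum_eq_schurQ_gf_power_coeff:
  assumes "n \<ge> 1"
  shows "(\<Sum>la\<in>partitions n.
           (2 ^ size la * (\<Prod>j<size la - 1. real (n - j)) / (\<Prod>i\<in>{1..n}. fact (count la i))) * V N x la)
         = (schurQ_gf N x ^ (n + 1)) $ n / real (n + 1)"
proof -
  define q where "q k = schurQ_gf N x $ k" for k
  have "(2 ^ size la * (\<Prod>j<size la - 1. real (n - j)) / (\<Prod>i\<in>{1..n}. fact (count la i))) * V N x la =
      real (card (permutations_of_multiset la)) * (real (n + 1 choose size la) * (\<Prod>k\<in>#la. q k)) / real (n + 1)"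
    if "la \<in> partitions n" for la
  proof -
    define P where "P = (\<Prod>j<size la - 1. real (n - j))"
    define F where "F = (\<Prod>i\<in>{1..n}. fact (count la i) :: real)"
    have "F \<noteq> 0" by (simp add: F_def)
    then have "(2 ^ size la * P / F) * V N x la = P / F * (\<Prod>k\<in>#la. q k)"
      by (simp add: V_conv_schurQ_gf q_def)
    also have "\<dots> = real (card (permutations_of_multiset la)) * real (n + 1 choose size la) / real (n + 1) *
        (\<Prod>k\<in>#la. q k)"
      unfolding P_def F_def partition_coeff_eq[OF that assms] ..
    finally show ?thesis unfolding P_def F_def by simp
  qed
  then have "(\<Sum>la\<in>partitions n.
      (2 ^ size la * (\<Prod>j<size la - 1. real (n - j)) / (\<Prod>i\<in>{1..n}. fact (count la i))) * V N x la) =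
      (\<Sum>la\<in>partitions n. real (card (permutations_of_multiset la)) *
        (real (n + 1 choose size la) * (\<Prod>k\<in>#la. q k))) / real (n + 1)"
    by (simp add: sum_divide_distrib)
  also have "(\<Sum>la\<in>partitions n. real (card (permutations_of_multiset la)) *
      (real (n + 1 choose size la) * (\<Prod>k\<in>#la. q k))) =
      (\<Sum>xs\<in>compositions n. real (n + 1 choose length xs) * (\<Prod>k\<leftarrow>xs. q k))"
    using sum_compositions_by_partitions[of "\<lambda>la. real (n + 1 choose size la) * (\<Prod>k\<in>#la. q k)" n]
    by (simp add: prod_mset_prod_list flip: mset_map)
  also have "\<dots> = (schurQ_gf N x ^ (n + 1)) $ n"
    unfolding q_def by (rule fps_power_nth_binomial_compositions[symmetric]) (rule schurQ_gf_nth_0)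
  finally show ?thesis .
qed

section \<open>Both sides as a coefficient of a power of Q\<close>

lemma pf_fix_mult_Suc_eq_power:
  assumes "\<sigma> permutes {0..<n}"
  shows "real (pf_fix n \<sigma>) * real (n + 1) = real (n + 1) ^ card (perm_cycles \<sigma> {0..<n})"
proof -
  have "(n + 1) * pf_fix n \<sigma> = (n + 1) ^ card (perm_cycles \<sigma> {0..<n})"
    using Suc_mult_pf_fix_eq_card[OF assms] card_invariant_words[OF assms, of "{1..n + 1}"] by simp
  then show ?thesis by (metis mult.commute of_nat_mult of_nat_power)
qed

lemma pmono_shift_cycle_type:
  "pmono_shift N x (cycle_type n \<sigma>) = (\<Prod>c\<in>perm_cycles \<sigma> {0..<n}. psum_shift N x (card c))"
  by (simp add: pmono_shift_def psum_shift_def cycle_type_conv_perm_cycles prod_unfold_prod_mset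
      image_mset.compositionality o_def perm_cycles_def)

lemma SH_eq_schurQ_gf_power_coeff: "SH n N x = (schurQ_gf N x ^ (n + 1)) $ n / real (n + 1)"
proof -
  define Perm where "Perm = {\<sigma>. \<sigma> permutes {0..<n}}"
  define w where "w k = real (n + 1) * psum_shift N x k" for k
  have "SH n N x = (\<Sum>\<mu>\<in>partitions n. \<Sum>\<sigma>\<in>{\<sigma> \<in> Perm. cycle_type n \<sigma> = \<mu>}.
      real (pf_fix n \<sigma>) * pmono_shift N x (cycle_type n \<sigma>)) / fact n"
    unfolding SH_def PF_coeff_def Perm_def
    by (simp add: sum_divide_distrib sum_distrib_right conj_commute cong: conj_cong)
  also have "\<dots> = (\<Sum>\<sigma>\<in>Perm. real (pf_fix n \<sigma>) * pmono_shift N x (cycle_type n \<sigma>)) / fact n"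
    using cycle_type_in_partitions finite_partitions
    by (subst sum.group) (auto simp: Perm_def finite_permutations)
  also have "\<dots> = (\<Sum>\<sigma>\<in>Perm. cycle_weight w {0..<n} \<sigma>) / real (n + 1) / fact n"
  proof -
    have "real (pf_fix n \<sigma>) * pmono_shift N x (cycle_type n \<sigma>) = cycle_weight w {0..<n} \<sigma> / real (n + 1)"
      if "\<sigma> \<in> Perm" for \<sigma>
    proof -
      have "cycle_weight w {0..<n} \<sigma> =
          real (n + 1) ^ card (perm_cycles \<sigma> {0..<n}) * pmono_shift N x (cycle_type n \<sigma>)"
        by (simp add: cycle_weight_def w_def prod.distrib pmono_shift_cycle_type perm_cycles_def)
      also have "\<dots> = real (pf_fix n \<sigma>) * pmono_shift N x (cycle_type n \<sigma>) * real (n + 1)"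
        using pf_fix_mult_Suc_eq_power that by (simp add: Perm_def)
      finally show ?thesis by simp
    qed
    then show ?thesis by (simp add: sum_divide_distrib)
  qed
  also have "(\<Sum>\<sigma>\<in>Perm. cycle_weight w {0..<n} \<sigma>) =
      fact (card {0..<n}) * (schurQ_gf N x ^ (n + 1)) $ card {0..<n}"
    unfolding Perm_def
  proof (rule exponential_formula)
    show "(schurQ_gf N x ^ (n + 1)) $ 0 = 1" by (simp add: fps_nth_power_0 schurQ_gf_nth_0)
    show "of_nat m * (schurQ_gf N x ^ (n + 1)) $ m = (\<Sum>k=1..m. w k * (schurQ_gf N x ^ (n + 1)) $ (m - k))"
      if "m \<ge> 1" for m
      unfolding w_def by (rule schurQ_gf_power_recurrence[OF that])
  qed simp
  finally show ?thesis by simp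
qed

theorem mainTheorem5:
  fixes n N :: nat and x :: "nat \<Rightarrow> real"
  assumes "n \<ge> 1"
  shows "SH n N x =
    (\<Sum>la\<in>partitions n.
       (2 ^ size la * (\<Prod>j<size la - 1. real (n - j)) /
        (\<Prod>i\<in>{1..n}. fact (count la i))) * V N x la)"
  using SH_eq_schurQ_gf_power_coeff[of n N x] partition_sum_eq_schurQ_gf_power_coeff[OF assms, of N x]
  by simp

end
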